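(* Let $R$ be a finite local commutative ring, $K\le R^\times$ a pure group, and $\mathcal C=\mathrm{Cyc}(K,R)$. Let $I_0=\{x\in\mathrm{rad}(R): x\,\mathrm{rad}(R)=\{0\}\}$, $U_0=K\cap(1+I_0)$, and let $E_0$ be the equivalence relation on $R$ whose classes are the cosets of $I_0$. Then $\mathcal C_{E_0}\ge\mathrm{Cyc}(U_0,R)$.
   Context: All rings have an identity; $\mathrm{rad}(R)$ is the unique maximal ideal of the local ring $R$. A scheme (coherent configuration) on a finite set $V$ is a pair $(V,\mathcal R)$ where $\mathcal R$ is a partition of $V\times V$ into nonempty relations, closed under transposition, such that the diagonal $\Delta(V)$ is a union of members of $\mathcal R$, and for $R_1,R_2,T\in\mathcal R$ the number $|\{y:(x,y)\in R_1,(y,z)\in R_2\}|$ is the same for all $(x,z)\in T$. Elements of $\mathcal R$ are basis relations; unions of them are relations ($\mathcal R^*$). For schemes on $V$, $\mathcal C\le\mathcal C'$ means every relation of $\mathcal C$ is a relation of $\mathcal C'$. For an equivalence relation $E$ on $V$, $\mathcal C_E$ is the smallest scheme on $V$ that is $\ge\mathcal C$ and has $\Delta(X)=\{(x,x):x\in X\}$ as a relation for every class $X$ of $E$. For $K\le R^\times$, $\mathrm{Cyc}(K,R)$ is the scheme on $R$ whose basis relations are $\{(x,y): y-x\in rK\}$, $r\in R$. A group $K\le R^\times$ is pure if the only ideal $I$ of $R$ with $1+I\subseteq K$ is $I=\{0\}$. *)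

theory Defs
  imports Main
begin

definition ring_ideal :: "'a::comm_ring_1 set \<Rightarrow> bool" where
  "ring_ideal I \<longleftrightarrow> 0 \<in> I \<and> (\<forall>x\<in>I. \<forall>y\<in>I. x + y \<in> I) \<and>
     (\<forall>x\<in>I. -x \<in> I) \<and> (\<forall>r. \<forall>x\<in>I. r * x \<in> I)"

definition maximal_ideal :: "'a::comm_ring_1 set \<Rightarrow> bool" where
  "maximal_ideal I \<longleftrightarrow> ring_ideal I \<and> I \<noteq> UNIV \<and>
     (\<forall>J. ring_ideal J \<and> I \<subseteq> J \<longrightarrow> J = I \<or> J = UNIV)"

definition local_ring :: "'a::comm_ring_1 itself \<Rightarrow> bool" where
  "local_ring _ \<longleftrightarrow> (\<exists>!I::'a set. maximal_ideal I)"

definition rad :: "'a::comm_ring_1 set" where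
  "rad = (THE I. maximal_ideal I)"

definition ring_units :: "'a::comm_ring_1 set" where
  "ring_units = {x. x dvd 1}"

definition unit_subgroup :: "'a::comm_ring_1 set \<Rightarrow> bool" where
  "unit_subgroup K \<longleftrightarrow> K \<subseteq> ring_units \<and> 1 \<in> K \<and> (\<forall>x\<in>K. \<forall>y\<in>K. x * y \<in> K) \<and>
     (\<forall>x\<in>K. \<exists>y\<in>K. x * y = 1)"

definition pure :: "'a::comm_ring_1 set \<Rightarrow> bool" where
  "pure K \<longleftrightarrow> (\<forall>I. ring_ideal I \<and> (\<lambda>x. 1 + x) ` I \<subseteq> K \<longrightarrow> I = {0})"

text \<open>A scheme on V is represented by its set of basis relations.\<close>
definition is_scheme :: "'a set \<Rightarrow> ('a \<times> 'a) set set \<Rightarrow> bool" where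
  "is_scheme V S \<longleftrightarrow>
     (\<forall>r\<in>S. r \<subseteq> V \<times> V \<and> r \<noteq> {}) \<and>
     (\<forall>r\<in>S. \<forall>s\<in>S. r \<noteq> s \<longrightarrow> r \<inter> s = {}) \<and>
     \<Union>S = V \<times> V \<and>
     (\<forall>r\<in>S. r\<inverse> \<in> S) \<and>
     (\<exists>T\<subseteq>S. \<Union>T = Id_on V) \<and>
     (\<forall>r1\<in>S. \<forall>r2\<in>S. \<forall>t\<in>S. \<exists>c. \<forall>(x,z)\<in>t.
        card {y. (x,y) \<in> r1 \<and> (y,z) \<in> r2} = c)"

definition scheme_rels :: "('a \<times> 'a) set set \<Rightarrow> ('a \<times> 'a) set set" where
  "scheme_rels S = {\<Union>T | T. T \<subseteq> S}"

definition scheme_le :: "('a \<times> 'a) set set \<Rightarrow> ('a \<times> 'a) set set \<Rightarrow> bool" where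
  "scheme_le C C' \<longleftrightarrow> scheme_rels C \<subseteq> scheme_rels C'"

definition scheme_ext :: "'a set \<Rightarrow> ('a \<times> 'a) set set \<Rightarrow> ('a \<times> 'a) set \<Rightarrow> ('a \<times> 'a) set set" where
  "scheme_ext V C E = (THE D. is_scheme V D \<and> scheme_le C D \<and>
      (\<forall>X\<in>V // E. Id_on X \<in> scheme_rels D) \<and>
      (\<forall>D'. is_scheme V D' \<and> scheme_le C D' \<and> (\<forall>X\<in>V // E. Id_on X \<in> scheme_rels D')
             \<longrightarrow> scheme_le D D'))"

text \<open>Cyc(K,R) on the whole ring (the universe of the type).\<close>
definition Cyc :: "'a::comm_ring_1 set \<Rightarrow> ('a \<times> 'a) set set" where
  "Cyc K = {{(x,y). y - x \<in> (\<lambda>k. r * k) ` K} | r. True}"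

end

theory Submission
  imports Defs
begin

text \<open>
  The relations of a scheme on a finite set form a coherent algebra: a set of relations closed
  under the Boolean operations, converse, and the counting relations count_rel r s k, whose
  atoms are the basis relations. Hence the relations of C_E are the intersection of all coherent
  algebras containing the relations of C and the diagonals of the classes of E.

  For a unit s, the basis relation of Cyc(U0, R) through s is that of Cyc(K, R) cut down by the
  relation y - x - s \<in> I0, which is a union of products of E0-classes. For s \<in> rad(R) it is
  the difference relation y - x = s, since I0 annihilates s; and it is the intersection, over all
  units a, of the composites of the relations through a and s - a. Indeed, if (x, z) lies in all
  of them then z - x - s lies in a (U0 - 1) for every unit a; the elements with this property
  form an ideal J with 1 + J \<subseteq> K, so J = 0 by purity.
\<close>

section \<open>Coherent algebras of relations\<close>

definition count_rel :: "('a \<times> 'a) set \<Rightarrow> ('a \<times> 'a) set \<Rightarrow> nat \<Rightarrow> ('a \<times> 'a) set" where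
  "count_rel r s k = {(x, z). card {y. (x, y) \<in> r \<and> (y, z) \<in> s} = k}"

definition coherent_algebra :: "('a \<times> 'a) set set \<Rightarrow> bool" where
  "coherent_algebra A \<longleftrightarrow> {} \<in> A \<and> Id \<in> A \<and> (\<forall>r\<in>A. - r \<in> A) \<and> (\<forall>r\<in>A. \<forall>s\<in>A. r \<union> s \<in> A) \<and>
     (\<forall>r\<in>A. r\<inverse> \<in> A) \<and> (\<forall>r\<in>A. \<forall>s\<in>A. \<forall>k. count_rel r s k \<in> A)"

definition atoms :: "('a \<times> 'a) set set \<Rightarrow> ('a \<times> 'a) set set" where
  "atoms A = {t \<in> A. t \<noteq> {} \<and> (\<forall>s\<in>A. t \<subseteq> s \<or> t \<inter> s = {})}"

lemma Inter_coherent_algebras: "(\<And>A. A \<in> F \<Longrightarrow> coherent_algebra A) \<Longrightarrow> coherent_algebra (\<Inter>F)"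
  unfolding coherent_algebra_def by blast

lemma
  assumes "coherent_algebra A"
  shows coherent_algebra_empty: "{} \<in> A"
    and coherent_algebra_Id: "Id \<in> A"
    and coherent_algebra_Compl: "r \<in> A \<Longrightarrow> - r \<in> A"
    and coherent_algebra_Un: "r \<in> A \<Longrightarrow> s \<in> A \<Longrightarrow> r \<union> s \<in> A"
    and coherent_algebra_converse: "r \<in> A \<Longrightarrow> r\<inverse> \<in> A"
    and coherent_algebra_count_rel: "r \<in> A \<Longrightarrow> s \<in> A \<Longrightarrow> count_rel r s k \<in> A"
  using assms unfolding coherent_algebra_def by blast+

lemma coherent_algebra_UNIV: "coherent_algebra A \<Longrightarrow> UNIV \<in> A"
  using coherent_algebra_Compl[OF _ coherent_algebra_empty] by simp

lemma coherent_algebra_Int: "coherent_algebra A \<Longrightarrow> r \<in> A \<Longrightarrow> s \<in> A \<Longrightarrow> r \<inter> s \<in> A"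
  using coherent_algebra_Compl[of A "- r \<union> - s"] by (simp add: coherent_algebra_Compl coherent_algebra_Un)

lemma coherent_algebra_Union:
  fixes F :: "('a::finite \<times> 'a) set set"
  assumes "coherent_algebra A" "F \<subseteq> A"
  shows "\<Union>F \<in> A"
  using finite[of F] assms(2)
  by (induction F rule: finite_induct)
    (auto intro: coherent_algebra_empty coherent_algebra_Un assms(1))

lemma coherent_algebra_Inter:
  fixes F :: "('a::finite \<times> 'a) set set"
  assumes "coherent_algebra A" "F \<subseteq> A"
  shows "\<Inter>F \<in> A"
  using finite[of F] assms(2)
  by (induction F rule: finite_induct)
    (auto intro: coherent_algebra_UNIV coherent_algebra_Int assms(1))

lemma coherent_algebra_relcomp:
  fixes r :: "('a::finite \<times> 'a) set"
  assumes "coherent_algebra A" "r \<in> A" "s \<in> A"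
  shows "r O s \<in> A"
proof -
  have "r O s = - count_rel r s 0"
    unfolding count_rel_def by auto
  then show ?thesis
    by (simp add: assms coherent_algebra_Compl coherent_algebra_count_rel)
qed

lemma scheme_rels_basis: "r \<in> D \<Longrightarrow> r \<in> scheme_rels D"
  unfolding scheme_rels_def by (intro CollectI exI[of _ "{r}"]) simp

lemma scheme_rels_subset_iff:
  fixes C :: "('a::finite \<times> 'a) set set"
  assumes "coherent_algebra A"
  shows "scheme_rels C \<subseteq> A \<longleftrightarrow> C \<subseteq> A"
proof
  assume "scheme_rels C \<subseteq> A"
  then show "C \<subseteq> A"
    using scheme_rels_basis[of _ C] by blast
next
  assume "C \<subseteq> A"
  then show "scheme_rels C \<subseteq> A"
    unfolding scheme_rels_def using coherent_algebra_Union[OF assms] by blast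
qed

lemma atom_containing:
  fixes A :: "('a::finite \<times> 'a) set set"
  assumes "coherent_algebra A"
  obtains t where "t \<in> atoms A" "p \<in> t"
proof
  let ?t = "\<Inter>{s\<in>A. p \<in> s}"
  have "?t \<in> A"
    by (rule coherent_algebra_Inter[OF assms]) blast
  moreover have "?t \<subseteq> s \<or> ?t \<inter> s = {}" if "s \<in> A" for s
  proof (cases "p \<in> s")
    case False
    then have "?t \<subseteq> - s"
      using that coherent_algebra_Compl[OF assms that] by blast
    then show ?thesis by blast
  qed (use that in blast)
  ultimately show "?t \<in> atoms A"
    unfolding atoms_def by blast
qed blast

lemma scheme_rels_atoms:
  fixes A :: "('a::finite \<times> 'a) set set"
  assumes "coherent_algebra A"
  shows "scheme_rels (atoms A) = A"
proof
  show "scheme_rels (atoms A) \<subseteq> A"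
    using scheme_rels_subset_iff[OF assms] unfolding atoms_def by blast
  show "A \<subseteq> scheme_rels (atoms A)"
  proof
    fix s assume s: "s \<in> A"
    have "s \<subseteq> \<Union>{t \<in> atoms A. t \<subseteq> s}"
    proof
      fix p assume p: "p \<in> s"
      obtain t where t: "t \<in> atoms A" "p \<in> t"
        using atom_containing[OF assms] .
      with s p have "t \<subseteq> s"
        unfolding atoms_def by blast
      with t show "p \<in> \<Union>{t \<in> atoms A. t \<subseteq> s}" by blast
    qed
    then have "s = \<Union>{t \<in> atoms A. t \<subseteq> s}" by blast
    then show "s \<in> scheme_rels (atoms A)"
      unfolding scheme_rels_def by blast
  qed
qed

section \<open>Schemes and coherent algebras\<close>

lemma
  assumes "is_scheme V D"
  shows is_scheme_disjoint: "r \<in> D \<Longrightarrow> s \<in> D \<Longrightarrow> r \<noteq> s \<Longrightarrow> r \<inter> s = {}"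
    and is_scheme_nonempty: "r \<in> D \<Longrightarrow> r \<noteq> {}"
    and is_scheme_cover: "\<Union>D = V \<times> V"
    and is_scheme_converse: "r \<in> D \<Longrightarrow> r\<inverse> \<in> D"
    and is_scheme_diagonal: "\<exists>T\<subseteq>D. \<Union>T = Id_on V"
    and is_scheme_intersection_numbers: "r1 \<in> D \<Longrightarrow> r2 \<in> D \<Longrightarrow> t \<in> D \<Longrightarrow>
      \<exists>c. \<forall>(x, z)\<in>t. card {y. (x, y) \<in> r1 \<and> (y, z) \<in> r2} = c"
  using assms unfolding is_scheme_def by simp_all

lemma is_scheme_atoms:
  fixes A :: "('a::finite \<times> 'a) set set"
  assumes A: "coherent_algebra A"
  shows "is_scheme UNIV (atoms A)"
  unfolding is_scheme_def
proof (intro conjI)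
  show "\<forall>r\<in>atoms A. r \<subseteq> UNIV \<times> UNIV \<and> r \<noteq> {}"
    unfolding atoms_def by simp
  show "\<forall>r\<in>atoms A. \<forall>s\<in>atoms A. r \<noteq> s \<longrightarrow> r \<inter> s = {}"
    unfolding atoms_def by blast
  have "p \<in> \<Union>(atoms A)" for p
    using atom_containing[OF A, of p] by blast
  then show "\<Union>(atoms A) = UNIV \<times> UNIV" by auto
  show "\<forall>r\<in>atoms A. r\<inverse> \<in> atoms A"
  proof
    fix r assume r: "r \<in> atoms A"
    have "r\<inverse> \<subseteq> s \<or> r\<inverse> \<inter> s = {}" if "s \<in> A" for s
    proof -
      have "r \<subseteq> s\<inverse> \<or> r \<inter> s\<inverse> = {}"
        using r coherent_algebra_converse[OF A that] unfolding atoms_def by blast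
      then show ?thesis by auto
    qed
    moreover have "r\<inverse> \<in> A" "r\<inverse> \<noteq> {}"
      using r coherent_algebra_converse[OF A] unfolding atoms_def by auto
    ultimately show "r\<inverse> \<in> atoms A"
      unfolding atoms_def by blast
  qed
  have "Id \<in> scheme_rels (atoms A)"
    using coherent_algebra_Id[OF A] by (simp add: scheme_rels_atoms[OF A])
  then obtain T where "T \<subseteq> atoms A" "\<Union>T = Id"
    unfolding scheme_rels_def by blast
  then show "\<exists>T\<subseteq>atoms A. \<Union>T = Id_on UNIV"
    by (intro exI[of _ T]) auto
  show "\<forall>r1\<in>atoms A. \<forall>r2\<in>atoms A. \<forall>t\<in>atoms A. \<exists>c. \<forall>(x, z)\<in>t.
      card {y. (x, y) \<in> r1 \<and> (y, z) \<in> r2} = c"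
  proof (intro ballI)
    fix r1 r2 t assume "r1 \<in> atoms A" "r2 \<in> atoms A" and t: "t \<in> atoms A"
    then have count: "count_rel r1 r2 k \<in> A" for k
      unfolding atoms_def by (simp add: coherent_algebra_count_rel[OF A])
    obtain x0 z0 where p0: "(x0, z0) \<in> t"
      using t unfolding atoms_def by auto
    define c where "c = card {y. (x0, y) \<in> r1 \<and> (y, z0) \<in> r2}"
    have "(x0, z0) \<in> count_rel r1 r2 c"
      unfolding count_rel_def c_def by simp
    then have "t \<subseteq> count_rel r1 r2 c"
      using t p0 count unfolding atoms_def by blast
    then show "\<exists>c. \<forall>(x, z)\<in>t. card {y. (x, y) \<in> r1 \<and> (y, z) \<in> r2} = c"
      unfolding count_rel_def by blast
  qed
qed

lemma scheme_rels_iff: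
  assumes D: "is_scheme UNIV D"
  shows "r \<in> scheme_rels D \<longleftrightarrow> (\<forall>t\<in>D. t \<subseteq> r \<or> t \<inter> r = {})"
proof
  assume "r \<in> scheme_rels D"
  then obtain T where T: "T \<subseteq> D" "r = \<Union>T"
    unfolding scheme_rels_def by blast
  show "\<forall>t\<in>D. t \<subseteq> r \<or> t \<inter> r = {}"
  proof
    fix t assume t: "t \<in> D"
    show "t \<subseteq> r \<or> t \<inter> r = {}"
    proof (cases "t \<in> T")
      case False
      with t T have "t \<inter> u = {}" if "u \<in> T" for u
        using that is_scheme_disjoint[OF D] by blast
      with T show ?thesis by blast
    qed (use T in blast)
  qed
next
  assume saturated: "\<forall>t\<in>D. t \<subseteq> r \<or> t \<inter> r = {}"
  have "\<Union>D = UNIV"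
    using is_scheme_cover[OF D] by simp
  with saturated have "r = \<Union>{t \<in> D. t \<subseteq> r}"
    by blast
  then show "r \<in> scheme_rels D"
    unfolding scheme_rels_def by blast
qed

lemma card_paths_Union:
  fixes T1 T2 :: "('a::finite \<times> 'a) set set"
  assumes "pairwise disjnt T1" "pairwise disjnt T2"
  shows "card {y. (x, y) \<in> \<Union>T1 \<and> (y, z) \<in> \<Union>T2} =
    (\<Sum>(r, s)\<in>T1 \<times> T2. card {y. (x, y) \<in> r \<and> (y, z) \<in> s})"
proof -
  define paths :: "('a \<times> 'a) set \<times> ('a \<times> 'a) set \<Rightarrow> 'a set"
    where "paths = (\<lambda>(r, s). {y. (x, y) \<in> r \<and> (y, z) \<in> s})"
  have "paths (r, s) \<inter> paths (r', s') = {}"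
    if "(r, s) \<in> T1 \<times> T2" "(r', s') \<in> T1 \<times> T2" "(r, s) \<noteq> (r', s')" for r s r' s'
  proof (cases "r = r'")
    case True
    with that assms(2) have "disjnt s s'"
      unfolding pairwise_def by auto
    then show ?thesis
      unfolding paths_def disjnt_def by auto
  next
    case False
    with that assms(1) have "disjnt r r'"
      unfolding pairwise_def by auto
    then show ?thesis
      unfolding paths_def disjnt_def by auto
  qed
  then have "card (\<Union>q\<in>T1 \<times> T2. paths q) = (\<Sum>q\<in>T1 \<times> T2. card (paths q))"
    by (intro card_UN_disjoint) auto
  moreover have "{y. (x, y) \<in> \<Union>T1 \<and> (y, z) \<in> \<Union>T2} = (\<Union>q\<in>T1 \<times> T2. paths q)"
    unfolding paths_def by blast
  ultimately show ?thesis
    unfolding paths_def by (simp add: case_prod_unfold)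
qed

lemma is_scheme_card_paths_eq:
  fixes D :: "('a::finite \<times> 'a) set set"
  assumes D: "is_scheme UNIV D" and "r \<in> scheme_rels D" "s \<in> scheme_rels D"
    and "t \<in> D" "(x, z) \<in> t" "(x', z') \<in> t"
  shows "card {y. (x, y) \<in> r \<and> (y, z) \<in> s} = card {y. (x', y) \<in> r \<and> (y, z') \<in> s}"
proof -
  obtain T1 T2 where T: "T1 \<subseteq> D" "T2 \<subseteq> D" "r = \<Union>T1" "s = \<Union>T2"
    using assms(2,3) unfolding scheme_rels_def by blast
  have "pairwise disjnt D"
    using is_scheme_disjoint[OF D] unfolding pairwise_def disjnt_def by blast
  then have disjoint: "pairwise disjnt T1" "pairwise disjnt T2"
    using T pairwise_subset by blast+
  have "card {y. (x, y) \<in> r1 \<and> (y, z) \<in> r2} = card {y. (x', y) \<in> r1 \<and> (y, z') \<in> r2}"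
    if r1: "r1 \<in> D" and r2: "r2 \<in> D" for r1 r2
  proof -
    obtain c where "\<forall>(x, z)\<in>t. card {y. (x, y) \<in> r1 \<and> (y, z) \<in> r2} = c"
      using is_scheme_intersection_numbers[OF D r1 r2 assms(4)] by blast
    with assms(5,6) have "card {y. (x, y) \<in> r1 \<and> (y, z) \<in> r2} = c"
      "card {y. (x', y) \<in> r1 \<and> (y, z') \<in> r2} = c"
      by fast+
    then show ?thesis by simp
  qed
  with T show ?thesis
    unfolding T(3,4) card_paths_Union[OF disjoint]
    by (intro sum.cong) auto
qed

lemma coherent_algebra_scheme_rels:
  fixes D :: "('a::finite \<times> 'a) set set"
  assumes D: "is_scheme UNIV D"
  shows "coherent_algebra (scheme_rels D)"
  unfolding coherent_algebra_def
proof (intro conjI ballI allI)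
  show "{} \<in> scheme_rels D"
    unfolding scheme_rels_def by blast
  obtain T where "T \<subseteq> D" "\<Union>T = Id_on UNIV"
    using is_scheme_diagonal[OF D] by blast
  moreover from this have "Id = \<Union>T" by auto
  ultimately show "Id \<in> scheme_rels D"
    unfolding scheme_rels_def by blast
  fix r s assume r: "r \<in> scheme_rels D"
  then show "- r \<in> scheme_rels D"
    unfolding scheme_rels_iff[OF D] by blast
  show "r\<inverse> \<in> scheme_rels D"
    unfolding scheme_rels_iff[OF D]
  proof
    fix t assume "t \<in> D"
    then have "t\<inverse> \<in> D"
      by (rule is_scheme_converse[OF D])
    with r have "t\<inverse> \<subseteq> r \<or> t\<inverse> \<inter> r = {}"
      unfolding scheme_rels_iff[OF D] by (rule bspec)
    then show "t \<subseteq> r\<inverse> \<or> t \<inter> r\<inverse> = {}"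
      by (metis converse_Int converse_converse converse_empty converse_mono)
  qed
  assume s: "s \<in> scheme_rels D"
  with r show "r \<union> s \<in> scheme_rels D"
    unfolding scheme_rels_iff[OF D] by blast
  fix k
  show "count_rel r s k \<in> scheme_rels D"
    unfolding scheme_rels_iff[OF D]
  proof
    fix t assume t: "t \<in> D"
    show "t \<subseteq> count_rel r s k \<or> t \<inter> count_rel r s k = {}"
      using is_scheme_card_paths_eq[OF D r s t] unfolding count_rel_def by fast
  qed
qed

lemma atoms_scheme_rels:
  fixes D :: "('a::finite \<times> 'a) set set"
  assumes D: "is_scheme UNIV D"
  shows "atoms (scheme_rels D) = D"
proof (intro equalityI subsetI)
  fix t assume t: "t \<in> atoms (scheme_rels D)"
  then obtain p where p: "p \<in> t"
    unfolding atoms_def by blast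
  have "p \<in> \<Union>D"
    using is_scheme_cover[OF D] by simp
  then obtain u where u: "u \<in> D" "p \<in> u"
    by blast
  with t p have "t \<subseteq> u"
    unfolding atoms_def using scheme_rels_basis[of u D] by blast
  moreover have "u \<subseteq> t"
    using t u p unfolding atoms_def scheme_rels_iff[OF D] by blast
  ultimately show "t \<in> D"
    using u(1) by simp
next
  fix t assume t: "t \<in> D"
  then show "t \<in> atoms (scheme_rels D)"
    unfolding atoms_def using scheme_rels_basis[of t D] is_scheme_nonempty[OF D t]
    by (auto simp: scheme_rels_iff[OF D])
qed

lemma scheme_rels_scheme_ext:
  fixes C :: "('a::finite \<times> 'a) set set" and E :: "('a \<times> 'a) set"
  defines "A0 \<equiv> \<Inter>{A. coherent_algebra A \<and> C \<subseteq> A \<and> (\<forall>X\<in>UNIV // E. Id_on X \<in> A)}"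
  shows "scheme_rels (scheme_ext UNIV C E) = A0"
proof -
  have A0: "coherent_algebra A0"
    unfolding A0_def by (rule Inter_coherent_algebras) blast
  have le_iff: "scheme_le C D \<longleftrightarrow> C \<subseteq> scheme_rels D" if "is_scheme UNIV D" for D
    unfolding scheme_le_def
    using scheme_rels_subset_iff[OF coherent_algebra_scheme_rels[OF that]] .
  have least: "A0 \<subseteq> scheme_rels D"
    if "is_scheme UNIV D" "scheme_le C D" "\<forall>X\<in>UNIV // E. Id_on X \<in> scheme_rels D" for D
    using that coherent_algebra_scheme_rels[OF that(1)] unfolding le_iff[OF that(1)] A0_def
    by blast
  have rels0: "scheme_rels (atoms A0) = A0"
    by (rule scheme_rels_atoms[OF A0])
  have "C \<subseteq> A0" "\<forall>X\<in>UNIV // E. Id_on X \<in> A0"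
    unfolding A0_def by blast+
  then have ext0: "is_scheme UNIV (atoms A0)" "scheme_le C (atoms A0)"
    "\<forall>X\<in>UNIV // E. Id_on X \<in> scheme_rels (atoms A0)"
    using is_scheme_atoms[OF A0] by (simp_all add: rels0 scheme_le_def scheme_rels_subset_iff[OF A0])
  have "scheme_ext UNIV C E = atoms A0"
    unfolding scheme_ext_def
  proof (rule the_equality, goal_cases)
    case 1
    with ext0 least show ?case
      by (simp add: scheme_le_def rels0)
  next
    case (2 D)
    then have D: "is_scheme UNIV D" and "scheme_le D (atoms A0)"
      using ext0 by blast+
    with 2 have "scheme_rels D = A0"
      using least[OF D] unfolding scheme_le_def rels0 by blast
    then show ?case
      using atoms_scheme_rels[OF D] by simp
  qed
  with rels0 show ?thesis by simp
qed

lemma scheme_le_scheme_ext: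
  fixes C C' :: "('a::finite \<times> 'a) set set"
  assumes "\<And>A. coherent_algebra A \<Longrightarrow> C \<subseteq> A \<Longrightarrow> (\<forall>X\<in>UNIV // E. Id_on X \<in> A) \<Longrightarrow> C' \<subseteq> A"
  shows "scheme_le C' (scheme_ext UNIV C E)"
proof -
  have "coherent_algebra (scheme_rels (scheme_ext UNIV C E))"
    unfolding scheme_rels_scheme_ext by (rule Inter_coherent_algebras) blast
  moreover have "C' \<subseteq> scheme_rels (scheme_ext UNIV C E)"
    unfolding scheme_rels_scheme_ext using assms by blast
  ultimately show ?thesis
    unfolding scheme_le_def by (simp add: scheme_rels_subset_iff)
qed

section \<open>Ideals of a finite local ring\<close>

lemma
  assumes "ring_ideal I"
  shows ring_ideal_zero: "0 \<in> I"
    and ring_ideal_add: "x \<in> I \<Longrightarrow> y \<in> I \<Longrightarrow> x + y \<in> I"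
    and ring_ideal_uminus: "x \<in> I \<Longrightarrow> - x \<in> I"
    and ring_ideal_mult: "x \<in> I \<Longrightarrow> r * x \<in> I"
  using assms unfolding ring_ideal_def by blast+

lemma ring_ideal_diff: "ring_ideal I \<Longrightarrow> x \<in> I \<Longrightarrow> y \<in> I \<Longrightarrow> x - y \<in> I"
  using ring_ideal_add[of I x "- y"] ring_ideal_uminus[of I y] by simp

lemma ring_idealI:
  assumes "0 \<in> I" "\<And>x y. x \<in> I \<Longrightarrow> y \<in> I \<Longrightarrow> x - y \<in> I" "\<And>r x. x \<in> I \<Longrightarrow> r * x \<in> I"
  shows "ring_ideal I"
proof -
  have uminus: "- x \<in> I" if "x \<in> I" for x
    using assms(3)[OF that, of "- 1"] by simp
  have add: "x + y \<in> I" if "x \<in> I" "y \<in> I" for x y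
    using assms(2)[OF that(1) uminus[OF that(2)]] by simp
  show ?thesis
    unfolding ring_ideal_def by (intro conjI ballI allI assms(1) add uminus assms(3))
qed

lemma ring_ideal_eq_UNIV_if_one: "ring_ideal I \<Longrightarrow> 1 \<in> I \<Longrightarrow> I = UNIV"
  using ring_ideal_mult[of I 1] by auto

lemma ring_ideal_multiples: "ring_ideal {y. x dvd y}"
  unfolding ring_ideal_def by (simp add: dvd_add dvd_mult)

lemma ex_maximal_ideal_superset:
  fixes J :: "'a::{comm_ring_1, finite} set"
  assumes "ring_ideal J" "1 \<notin> J"
  obtains M where "maximal_ideal M" "J \<subseteq> M"
proof -
  let ?S = "{I. ring_ideal I \<and> J \<subseteq> I \<and> 1 \<notin> I}"
  have "J \<in> ?S"
    using assms by blast
  then obtain M where M: "M \<in> ?S" and M_max: "\<forall>I\<in>?S. M \<subseteq> I \<longrightarrow> M = I"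
    using finite_has_maximal[of ?S] by auto
  have "I = M \<or> I = UNIV" if "ring_ideal I" "M \<subseteq> I" for I
  proof (cases "1 \<in> I")
    case True
    then show ?thesis
      using ring_ideal_eq_UNIV_if_one[OF that(1)] by blast
  next
    case False
    with that M have "I \<in> ?S" by blast
    with that M_max show ?thesis by blast
  qed
  with M have "maximal_ideal M"
    unfolding maximal_ideal_def by blast
  with M show thesis
    using that by blast
qed

lemma maximal_ideal_rad: "local_ring TYPE('a::comm_ring_1) \<Longrightarrow> maximal_ideal (rad :: 'a set)"
  unfolding local_ring_def rad_def by (rule theI')

lemma ring_ideal_rad: "local_ring TYPE('a::comm_ring_1) \<Longrightarrow> ring_ideal (rad :: 'a set)"
  using maximal_ideal_rad unfolding maximal_ideal_def by blast

lemma rad_iff_not_unit: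
  fixes x :: "'a::{comm_ring_1, finite}"
  assumes local: "local_ring TYPE('a)"
  shows "x \<in> rad \<longleftrightarrow> \<not> x dvd 1"
proof
  assume "x \<in> rad"
  then have "x * k \<in> rad" for k
    using ring_ideal_mult[OF ring_ideal_rad[OF local]] by (metis mult.commute)
  moreover have "(rad :: 'a set) \<noteq> UNIV"
    using maximal_ideal_rad[OF local] unfolding maximal_ideal_def by blast
  ultimately show "\<not> x dvd 1"
    using ring_ideal_eq_UNIV_if_one[OF ring_ideal_rad[OF local]] by (metis dvdE)
next
  assume "\<not> x dvd 1"
  then have "1 \<notin> {y. x dvd y}" by simp
  then obtain M where "maximal_ideal M" "{y. x dvd y} \<subseteq> M"
    by (rule ex_maximal_ideal_superset[OF ring_ideal_multiples])
  moreover from this(1) have "M = rad"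
    using local maximal_ideal_rad[OF local] unfolding local_ring_def by blast
  ultimately show "x \<in> rad"
    using dvd_refl[of x] by blast
qed

lemma is_unit_rad_diff_unit:
  fixes s :: "'a::{comm_ring_1, finite}"
  assumes local: "local_ring TYPE('a)" and "s \<in> rad" "a dvd 1"
  shows "(s - a) dvd 1"
proof -
  have "s - (s - a) \<notin> rad"
    using assms rad_iff_not_unit[OF local] by simp
  with assms(2) show ?thesis
    using ring_ideal_diff[OF ring_ideal_rad[OF local]] rad_iff_not_unit[OF local] by blast
qed

section \<open>Purity\<close>

definition rad_annihilator :: "'a::comm_ring_1 set" where
  "rad_annihilator = {x \<in> rad. \<forall>y\<in>rad. x * y = 0}"

lemma rad_annihilator_mult_rad: "i \<in> rad_annihilator \<Longrightarrow> y \<in> rad \<Longrightarrow> i * y = 0"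
  unfolding rad_annihilator_def by blast

lemma rad_annihilator_subset_rad: "rad_annihilator \<subseteq> rad"
  unfolding rad_annihilator_def by blast

lemma ring_ideal_rad_annihilator:
  assumes "local_ring TYPE('a::comm_ring_1)"
  shows "ring_ideal (rad_annihilator :: 'a set)"
proof -
  note rad = ring_ideal_rad[OF assms]
  show ?thesis
    unfolding ring_ideal_def rad_annihilator_def
    by (simp add: ring_ideal_zero[OF rad] ring_ideal_add[OF rad] ring_ideal_uminus[OF rad]
        ring_ideal_mult[OF rad] distrib_right mult.assoc)
qed

lemma one_plus_diff_in_unit_subgroup:
  assumes K: "unit_subgroup K" and "1 + i \<in> K" "1 + j \<in> K" "i * j = 0" "j * j = 0"
  shows "1 + (i - j) \<in> K"
proof -
  obtain v where v: "v \<in> K" "(1 + j) * v = 1"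
    using K assms(3) unfolding unit_subgroup_def by blast
  have "(1 - j) * (1 + j) = 1"
    using assms(5) by (simp add: algebra_simps)
  then have "1 - j = v"
    using v(2) by (metis mult.assoc mult_1_left mult_1_right)
  then have "(1 + i) * (1 - j) \<in> K"
    using K assms(2) v(1) unfolding unit_subgroup_def by blast
  moreover have "(1 + i) * (1 - j) = 1 + (i - j)"
    using assms(4) by (simp add: algebra_simps)
  ultimately show ?thesis by simp
qed

lemma rad_annihilator_one_plus_diff:
  assumes local: "local_ring TYPE('a::comm_ring_1)" and K: "unit_subgroup K"
    and i: "i \<in> rad_annihilator" "1 + i \<in> K" and j: "j \<in> (rad_annihilator :: 'a set)" "1 + j \<in> K"
  shows "i - j \<in> rad_annihilator" "1 + (i - j) \<in> K"
proof -
  show "i - j \<in> rad_annihilator"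
    using ring_ideal_diff[OF ring_ideal_rad_annihilator[OF local] i(1) j(1)] .
  have "i * j = 0" "j * j = 0"
    using i(1) j(1) rad_annihilator_mult_rad rad_annihilator_subset_rad by blast+
  then show "1 + (i - j) \<in> K"
    using one_plus_diff_in_unit_subgroup[OF K i(2) j(2)] by blast
qed

lemma ring_ideal_common_unit_multiples:
  fixes I :: "'a::{comm_ring_1, finite} set"
  assumes local: "local_ring TYPE('a)"
    and I: "0 \<in> I" "\<And>i j. i \<in> I \<Longrightarrow> j \<in> I \<Longrightarrow> i - j \<in> I"
    and annihilated: "\<And>i r. i \<in> I \<Longrightarrow> r \<in> rad \<Longrightarrow> r * i = 0"
  shows "ring_ideal {w. \<forall>a. a dvd 1 \<longrightarrow> w \<in> (\<lambda>i. a * i) ` I}" (is "ring_ideal ?W")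
proof -
  have multiple: "\<exists>i\<in>I. w = a * i" if "w \<in> ?W" "a dvd 1" for w a
    using that by blast
  have zero: "0 \<in> ?W"
    using I(1) by force
  show ?thesis
  proof (rule ring_idealI[OF zero])
    fix x y assume x: "x \<in> ?W" and y: "y \<in> ?W"
    show "x - y \<in> ?W"
    proof (intro CollectI allI impI)
      fix a :: 'a assume a: "a dvd 1"
      obtain i j where "i \<in> I" "j \<in> I" "x = a * i" "y = a * j"
        using multiple[OF x a] multiple[OF y a] by blast
      then have "x - y = a * (i - j)" "i - j \<in> I"
        using I(2) by (simp_all add: right_diff_distrib)
      then show "x - y \<in> (\<lambda>i. a * i) ` I"
        by (rule image_eqI)
    qed
  next
    fix r x assume x: "x \<in> ?W"
    show "r * x \<in> ?W"
    proof (cases "r dvd 1")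
      case True
      then obtain r' where r': "1 = r * r'"
        by (rule dvdE)
      show ?thesis
      proof (intro CollectI allI impI)
        fix a :: 'a assume "a dvd 1"
        moreover have "r' dvd 1"
          using r' by (simp add: dvdI mult.commute)
        ultimately have "a * r' dvd 1"
          using mult_dvd_mono[of a 1 r' 1] by simp
        then obtain i where "i \<in> I" "x = a * r' * i"
          using multiple[OF x] by blast
        moreover have "r * (a * r' * i) = a * i"
          using r' by (metis mult.commute mult.left_commute mult_1_right)
        ultimately show "r * x \<in> (\<lambda>i. a * i) ` I"
          by (metis image_eqI)
      qed
    next
      case False
      then have "r \<in> rad"
        using rad_iff_not_unit[OF local] by blast
      moreover obtain i where "i \<in> I" "x = 1 * i"
        using multiple[OF x one_dvd] by blast
      ultimately have "r * x = 0"
        using annihilated by simp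
      with zero show ?thesis
        by simp
    qed
  qed
qed

lemma pure_common_unit_multiples_eq_0:
  fixes K :: "'a::{comm_ring_1, finite} set"
  assumes local: "local_ring TYPE('a)" and K: "unit_subgroup K" "pure K"
    and w: "\<And>a. a dvd 1 \<Longrightarrow> \<exists>i\<in>rad_annihilator. 1 + i \<in> K \<and> w = a * i"
  shows "w = 0"
proof -
  define I where "I = {i \<in> rad_annihilator. 1 + i \<in> K}"
  define W where "W = {w. \<forall>a. a dvd 1 \<longrightarrow> w \<in> (\<lambda>i. a * i) ` I}"
  have "0 \<in> I"
    using ring_ideal_zero[OF ring_ideal_rad_annihilator[OF local]] K(1) unfolding I_def unit_subgroup_def by simp
  moreover have "i - j \<in> I" if "i \<in> I" "j \<in> I" for i j
    using that rad_annihilator_one_plus_diff[OF local K(1)] unfolding I_def by simp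
  moreover have "r * i = 0" if "i \<in> I" "r \<in> rad" for i r
    using that rad_annihilator_mult_rad unfolding I_def by (metis mem_Collect_eq mult.commute)
  ultimately have "ring_ideal W"
    unfolding W_def by (rule ring_ideal_common_unit_multiples[OF local])
  moreover have "(\<lambda>x. 1 + x) ` W \<subseteq> K"
  proof (rule image_subsetI)
    fix x assume "x \<in> W"
    then have "x \<in> (\<lambda>i. 1 * i) ` I"
      unfolding W_def by (blast intro: one_dvd)
    then have "x \<in> I" by simp
    then show "1 + x \<in> K"
      unfolding I_def by simp
  qed
  ultimately have "W = {0}"
    using K(2) unfolding pure_def by blast
  moreover have "w \<in> W"
    using w unfolding W_def I_def by blast
  ultimately show ?thesis by blast
qed

section \<open>Basis relations of cyclotomic schemes\<close>

definition cyc_rel :: "'a::comm_ring_1 set \<Rightarrow> 'a \<Rightarrow> ('a \<times> 'a) set" where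
  "cyc_rel K r = {(x, y). y - x \<in> (\<lambda>k. r * k) ` K}"

lemma Cyc_eq_range_cyc_rel: "Cyc K = range (cyc_rel K)"
  unfolding Cyc_def cyc_rel_def by blast

lemma mem_cyc_rel_one_plus:
  "(x, y) \<in> cyc_rel (K \<inter> (\<lambda>i. 1 + i) ` I) r \<longleftrightarrow> (\<exists>i\<in>I. 1 + i \<in> K \<and> y - x = r * (1 + i))"
  unfolding cyc_rel_def by blast

lemma cyc_rel_unit_eq_Int:
  fixes s :: "'a::comm_ring_1"
  assumes I: "ring_ideal I" and s: "s dvd 1"
  shows "cyc_rel (K \<inter> (\<lambda>i. 1 + i) ` I) s = cyc_rel K s \<inter> {(x, y). y - x - s \<in> I}"
proof (intro equalityI subrelI)
  fix x y
  assume "(x, y) \<in> cyc_rel (K \<inter> (\<lambda>i. 1 + i) ` I) s"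
  then obtain i where "i \<in> I" "1 + i \<in> K" "y - x = s * (1 + i)"
    unfolding mem_cyc_rel_one_plus by blast
  moreover from this have "y - x - s = s * i"
    by (simp add: algebra_simps)
  ultimately show "(x, y) \<in> cyc_rel K s \<inter> {(x, y). y - x - s \<in> I}"
    unfolding cyc_rel_def using ring_ideal_mult[OF I] by auto
next
  fix x y
  assume "(x, y) \<in> cyc_rel K s \<inter> {(x, y). y - x - s \<in> I}"
  then obtain k where k: "k \<in> K" "y - x = s * k" and "s * (k - 1) \<in> I"
    unfolding cyc_rel_def by (auto simp: algebra_simps)
  moreover obtain s' where "1 = s * s'"
    using s by (rule dvdE)
  ultimately have "k - 1 \<in> I"
    using ring_ideal_mult[OF I, of "s * (k - 1)" s'] by (simp add: algebra_simps)
  with k show "(x, y) \<in> cyc_rel (K \<inter> (\<lambda>i. 1 + i) ` I) s"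
    unfolding mem_cyc_rel_one_plus by (intro bexI[of _ "k - 1"]) simp_all
qed

lemma cyc_rel_annihilated:
  assumes "1 \<in> K" "0 \<in> I" "\<And>i. i \<in> I \<Longrightarrow> s * i = 0"
  shows "cyc_rel (K \<inter> (\<lambda>i. 1 + i) ` I) s = {(x, y). y - x = s}"
proof (intro equalityI subrelI)
  fix x y
  assume "(x, y) \<in> cyc_rel (K \<inter> (\<lambda>i. 1 + i) ` I) s"
  then obtain i where "i \<in> I" "y - x = s * (1 + i)"
    unfolding mem_cyc_rel_one_plus by blast
  with assms(3) show "(x, y) \<in> {(x, y). y - x = s}"
    by (simp add: distrib_left)
next
  fix x y
  assume "(x, y) \<in> {(x, y). y - x = s}"
  with assms(1,2) show "(x, y) \<in> cyc_rel (K \<inter> (\<lambda>i. 1 + i) ` I) s"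
    unfolding mem_cyc_rel_one_plus by (intro bexI[of _ 0]) simp_all
qed

lemma relcomp_cyc_rel_rad:
  fixes K :: "'a::comm_ring_1 set"
  assumes local: "local_ring TYPE('a)" and K: "unit_subgroup K" and s: "s \<in> rad"
    and "(x, y) \<in> cyc_rel (K \<inter> (\<lambda>i. 1 + i) ` rad_annihilator) a"
    and "(y, z) \<in> cyc_rel (K \<inter> (\<lambda>i. 1 + i) ` rad_annihilator) (s - a)"
  shows "\<exists>i\<in>rad_annihilator. 1 + i \<in> K \<and> z - x - s = a * i"
proof -
  obtain i j where i: "i \<in> rad_annihilator" "1 + i \<in> K" "y - x = a * (1 + i)"
    and j: "j \<in> rad_annihilator" "1 + j \<in> K" "z - y = (s - a) * (1 + j)"
    using assms(4,5) unfolding mem_cyc_rel_one_plus by blast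
  have "j * s = 0"
    using j(1) s by (rule rad_annihilator_mult_rad)
  then have "z - x - s = a * (i - j)"
    using i(3) j(3) by (simp add: algebra_simps)
  moreover have "i - j \<in> rad_annihilator" "1 + (i - j) \<in> K"
    using rad_annihilator_one_plus_diff[OF local K i(1,2) j(1,2)] by simp_all
  ultimately show ?thesis
    by blast
qed

lemma cyc_rel_rad_eq_Inter:
  fixes K :: "'a::{comm_ring_1, finite} set"
  assumes local: "local_ring TYPE('a)" and K: "unit_subgroup K" "pure K" and s: "s \<in> rad"
  defines "U \<equiv> K \<inter> (\<lambda>i. 1 + i) ` rad_annihilator"
  shows "cyc_rel U s = (\<Inter>a\<in>{a. a dvd 1}. cyc_rel U a O cyc_rel U (s - a))"
proof -
  have "1 \<in> K"
    using K(1) unfolding unit_subgroup_def by blast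
  moreover have zero: "(0 :: 'a) \<in> rad_annihilator"
    by (rule ring_ideal_zero[OF ring_ideal_rad_annihilator[OF local]])
  ultimately have step: "(x, x + r) \<in> cyc_rel U r" for x r
    unfolding U_def mem_cyc_rel_one_plus by (intro bexI[of _ 0]) simp_all
  have s_diff: "cyc_rel U s = {(x, y). y - x = s}"
    unfolding U_def using \<open>1 \<in> K\<close> zero
  proof (rule cyc_rel_annihilated)
    show "s * i = 0" if "i \<in> rad_annihilator" for i
      using rad_annihilator_mult_rad[OF that s] by (simp add: mult.commute)
  qed
  show ?thesis
  proof (intro equalityI subrelI)
    fix x z assume "(x, z) \<in> cyc_rel U s"
    then have "z = (x + a) + (s - a)" for a
      unfolding s_diff by (simp add: algebra_simps)
    then have "(x, z) \<in> cyc_rel U a O cyc_rel U (s - a)" for a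
      using step by (metis relcompI)
    then show "(x, z) \<in> (\<Inter>a\<in>{a. a dvd 1}. cyc_rel U a O cyc_rel U (s - a))"
      by blast
  next
    fix x z assume xz: "(x, z) \<in> (\<Inter>a\<in>{a. a dvd 1}. cyc_rel U a O cyc_rel U (s - a))"
    have "z - x - s = 0"
    proof (rule pure_common_unit_multiples_eq_0[OF local K])
      fix a :: 'a assume "a dvd 1"
      with xz obtain y where "(x, y) \<in> cyc_rel U a" "(y, z) \<in> cyc_rel U (s - a)"
        by blast
      then show "\<exists>i\<in>rad_annihilator. 1 + i \<in> K \<and> z - x - s = a * i"
        unfolding U_def by (rule relcomp_cyc_rel_rad[OF local K(1) s])
    qed
    then show "(x, z) \<in> cyc_rel U s"
      unfolding s_diff by simp
  qed
qed

lemma coherent_algebra_Times: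
  fixes X Y :: "'a::finite set"
  assumes A: "coherent_algebra A" and "Id_on X \<in> A" "Id_on Y \<in> A"
  shows "X \<times> Y \<in> A"
proof -
  have "X \<times> Y = (Id_on X O UNIV) O Id_on Y"
    by blast
  then show ?thesis
    using assms by (simp add: coherent_algebra_relcomp coherent_algebra_UNIV)
qed

lemma coherent_algebra_coset_rel:
  fixes I :: "'a::{comm_ring_1, finite} set"
  assumes A: "coherent_algebra A" and I: "ring_ideal I"
    and classes: "\<forall>X\<in>UNIV // {(x, y). y - x \<in> I}. Id_on X \<in> A"
  shows "{(x, y). y - x - a \<in> I} \<in> A"
proof -
  have coset_class: "Id_on {y. y - b \<in> I} \<in> A" for b
  proof -
    have "{(x, y). y - x \<in> I} `` {b} \<in> UNIV // {(x, y). y - x \<in> I}"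
      by (rule quotientI) simp
    moreover have "{(x, y). y - x \<in> I} `` {b} = {y. y - b \<in> I}"
      by blast
    ultimately show ?thesis
      using classes by simp
  qed
  have "{(x, y). y - x - a \<in> I} = (\<Union>b. {x. x - b \<in> I} \<times> {y. y - (b + a) \<in> I})"
  proof (intro equalityI subrelI)
    fix x y assume "(x, y) \<in> {(x, y). y - x - a \<in> I}"
    then have "x \<in> {x'. x' - x \<in> I}" "y \<in> {y. y - (x + a) \<in> I}"
      using ring_ideal_zero[OF I] by (simp_all add: algebra_simps)
    then show "(x, y) \<in> (\<Union>b. {x. x - b \<in> I} \<times> {y. y - (b + a) \<in> I})"
      by blast
  next
    fix x y assume "(x, y) \<in> (\<Union>b. {x. x - b \<in> I} \<times> {y. y - (b + a) \<in> I})"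
    then obtain b where "y - (b + a) \<in> I" "x - b \<in> I"
      by blast
    then have "(y - (b + a)) - (x - b) \<in> I"
      by (rule ring_ideal_diff[OF I])
    then show "(x, y) \<in> {(x, y). y - x - a \<in> I}"
      by (simp add: algebra_simps)
  qed
  moreover have "range (\<lambda>b. {x. x - b \<in> I} \<times> {y. y - (b + a) \<in> I}) \<subseteq> A"
    using coherent_algebra_Times[OF A coset_class coset_class] by blast
  ultimately show ?thesis
    using coherent_algebra_Union[OF A] by simp
qed

theorem theorem2p5:
  fixes K :: "'a::{comm_ring_1, finite} set"
  assumes "local_ring TYPE('a)"
    and "unit_subgroup K"
    and "pure K"
  defines "I0 \<equiv> {x \<in> (rad :: 'a set). \<forall>y\<in>rad. x * y = 0}"
  defines "U0 \<equiv> K \<inter> (\<lambda>x. 1 + x) ` I0"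
  defines "E0 \<equiv> {(x, y). y - x \<in> I0}"
  shows "scheme_le (Cyc U0) (scheme_ext UNIV (Cyc K) E0)"
proof (rule scheme_le_scheme_ext)
  fix A assume A: "coherent_algebra A" and "Cyc K \<subseteq> A" and classes: "\<forall>X\<in>UNIV // E0. Id_on X \<in> A"
  have I0: "I0 = rad_annihilator"
    unfolding I0_def rad_annihilator_def ..
  have I0_ideal: "ring_ideal I0"
    unfolding I0 by (rule ring_ideal_rad_annihilator[OF assms(1)])
  have unit_case: "cyc_rel U0 a \<in> A" if "a dvd 1" for a
  proof -
    have "cyc_rel K a \<in> A"
      using \<open>Cyc K \<subseteq> A\<close> unfolding Cyc_eq_range_cyc_rel by blast
    moreover have "{(x, y). y - x - a \<in> I0} \<in> A"
      using coherent_algebra_coset_rel[OF A I0_ideal] classes unfolding E0_def by blast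
    ultimately show ?thesis
      unfolding U0_def cyc_rel_unit_eq_Int[OF I0_ideal that] by (rule coherent_algebra_Int[OF A])
  qed
  have "cyc_rel U0 s \<in> A" for s
  proof (cases "s dvd 1")
    case False
    then have s: "s \<in> rad"
      using rad_iff_not_unit[OF assms(1)] by blast
    have "cyc_rel U0 a O cyc_rel U0 (s - a) \<in> A" if "a dvd 1" for a
      using unit_case that unit_case[OF is_unit_rad_diff_unit[OF assms(1) s that]]
      by (simp add: coherent_algebra_relcomp[OF A])
    then show ?thesis
      unfolding U0_def I0 cyc_rel_rad_eq_Inter[OF assms(1-3) s]
      by (intro coherent_algebra_Inter[OF A]) blast
  qed (rule unit_case)
  then show "Cyc U0 \<subseteq> A"
    unfolding Cyc_eq_range_cyc_rel by blast
qed

end
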